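(* Let $s\geqslant 1$ and let $1\leqslant k_i\leqslant d_i$, $i=1,\ldots,s$, be integers. Then $$n(k_1,d_1)\,n(k_2,d_2)\cdots n(k_s,d_s)\leqslant n(k_1+\cdots+k_s,\ d_1+\cdots+d_s).$$
   Context: A standard box in $\mathbb{R}^d$ is a set $K=K_1\times\cdots\times K_d$ where each $K_i\subset\mathbb{R}$ is a closed interval. For integers $1\leqslant k\leqslant d$, two standard boxes $K,L\subset\mathbb{R}^d$ are $k$-neighborly if $d-k\leqslant \dim(K\cap L)\leqslant d-1$, and a family of standard boxes is $k$-neighborly if every two distinct members are $k$-neighborly. $n(k,d)$ denotes the maximum possible cardinality of a $k$-neighborly family of standard boxes in $\mathbb{R}^d$. *)

theory Defs
  imports Complex_Main
begin

(* A standard box in R^d is represented by its factor intervals: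
   K i = (lower endpoint, upper endpoint) of the closed interval K_i, for i < d. Outside the index range
   {..<d} the representation is fixed to 'undefined', so distinct representations
   correspond exactly to distinct boxes (as point sets). *)
definition std_box :: "nat \<Rightarrow> (nat \<Rightarrow> real \<times> real) \<Rightarrow> bool" where
  "std_box d K \<longleftrightarrow> (\<forall>i<d. fst (K i) < snd (K i)) \<and> (\<forall>i\<ge>d. K i = undefined)"

(* The intersection is the product of the intervals
   [max lo_K lo_L, min hi_K hi_L]; it is empty (dimension -1) iff some factor is empty,
   and otherwise its dimension is the number of non-degenerate factors. *)
definition inter_dim :: "nat \<Rightarrow> (nat \<Rightarrow> real \<times> real) \<Rightarrow> (nat \<Rightarrow> real \<times> real) \<Rightarrow> int" where
  "inter_dim d K L =
     (if \<forall>i<d. max (fst (K i)) (fst (L i)) \<le> min (snd (K i)) (snd (L i))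
      then int (card {i. i < d \<and> max (fst (K i)) (fst (L i)) < min (snd (K i)) (snd (L i))})
      else -1)"

definition k_neighborly :: "nat \<Rightarrow> nat \<Rightarrow> (nat \<Rightarrow> real \<times> real) \<Rightarrow> (nat \<Rightarrow> real \<times> real) \<Rightarrow> bool" where
  "k_neighborly k d K L \<longleftrightarrow>
     int d - int k \<le> inter_dim d K L \<and> inter_dim d K L \<le> int d - 1"

definition k_neighborly_family :: "nat \<Rightarrow> nat \<Rightarrow> (nat \<Rightarrow> real \<times> real) set \<Rightarrow> bool" where
  "k_neighborly_family k d F \<longleftrightarrow>
     (\<forall>K\<in>F. std_box d K) \<and> (\<forall>K\<in>F. \<forall>L\<in>F. K \<noteq> L \<longrightarrow> k_neighborly k d K L)"

definition nbr :: "nat \<Rightarrow> nat \<Rightarrow> nat" where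
  "nbr k d = Max {card F | F. finite F \<and> k_neighborly_family k d F}"

end

theory Submission imports Defs begin

(* If F and G are k1- and k2-neighborly families in R^d1 and R^d2, the boxes K x L with K in F
   and L in G form a (k1+k2)-neighborly family in R^(d1+d2): intersection dimensions add up,
   and two distinct products differ in at least one factor, where the intersection loses a
   dimension.  The only further point is that the maximum n(k,d) exists for k <= d: two
   distinct members of such a family meet in every coordinate and touch at a single point in
   some coordinate, and since no three nondegenerate intervals pairwise touch, a family all of
   whose pairs touch in one of m coordinates has at most 1 + m * b(m - 1) members, where b(m - 1)
   bounds the case of m - 1 coordinates. *)

definition intervals_meet :: "real \<times> real \<Rightarrow> real \<times> real \<Rightarrow> bool" where
  "intervals_meet a b \<longleftrightarrow> max (fst a) (fst b) \<le> min (snd a) (snd b)"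

definition intervals_overlap :: "real \<times> real \<Rightarrow> real \<times> real \<Rightarrow> bool" where
  "intervals_overlap a b \<longleftrightarrow> max (fst a) (fst b) < min (snd a) (snd b)"

definition intervals_touch :: "real \<times> real \<Rightarrow> real \<times> real \<Rightarrow> bool" where
  "intervals_touch a b \<longleftrightarrow> snd a = fst b \<or> snd b = fst a"

lemma inter_dim_eq:
  "inter_dim d K L =
     (if \<forall>i<d. intervals_meet (K i) (L i)
      then int (card {i. i < d \<and> intervals_overlap (K i) (L i)}) else -1)"
  by (simp add: inter_dim_def intervals_meet_def intervals_overlap_def)

lemma inter_dim_nonnegD:
  assumes "0 \<le> inter_dim d K L"
  shows "\<forall>i<d. intervals_meet (K i) (L i)"
    and "inter_dim d K L = int (card {i. i < d \<and> intervals_overlap (K i) (L i)})"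
  using assms by (auto simp: inter_dim_eq split: if_splits)

lemma intervals_touch_if_meet_not_overlap:
  assumes "fst a < snd a" "fst b < snd b" "intervals_meet a b" "\<not> intervals_overlap a b"
  shows "intervals_touch a b"
  using assms unfolding intervals_meet_def intervals_overlap_def intervals_touch_def
  by (auto simp: max_def min_def split: if_splits)

lemma no_three_intervals_pairwise_touch:
  assumes "fst a < snd a" "fst b < snd b" "fst c < snd c"
    and "intervals_touch a b" "intervals_touch a c" "intervals_touch b c"
  shows False
  using assms unfolding intervals_touch_def by linarith

lemma neighborly_boxes_touch:
  assumes "std_box d K" "std_box d L" "k \<le> d" "k_neighborly k d K L"
  obtains i where "i < d" "intervals_touch (K i) (L i)"
proof -
  have dim: "0 \<le> inter_dim d K L" "inter_dim d K L < int d"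
    using assms(3,4) unfolding k_neighborly_def by auto
  have "{i. i < d \<and> intervals_overlap (K i) (L i)} \<noteq> {..<d}"
  proof
    assume "{i. i < d \<and> intervals_overlap (K i) (L i)} = {..<d}"
    then show False using dim inter_dim_nonnegD(2)[OF dim(1)] by simp
  qed
  then obtain i where i: "i < d" "\<not> intervals_overlap (K i) (L i)" by blast
  have "intervals_touch (K i) (L i)"
    using assms(1,2) i inter_dim_nonnegD(1)[OF dim(1)]
    by (intro intervals_touch_if_meet_not_overlap) (auto simp: std_box_def)
  with i(1) show thesis using that by blast
qed

fun touching_bound :: "nat \<Rightarrow> nat" where
  "touching_bound 0 = 1"
| "touching_bound (Suc n) = 1 + Suc n * touching_bound n"

lemma card_pairwise_touching_le:
  fixes F :: "('i \<Rightarrow> real \<times> real) set"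
  assumes "finite I" "finite F"
    and "\<And>K i. K \<in> F \<Longrightarrow> i \<in> I \<Longrightarrow> fst (K i) < snd (K i)"
    and "\<And>K L. K \<in> F \<Longrightarrow> L \<in> F \<Longrightarrow> K \<noteq> L \<Longrightarrow> \<exists>i\<in>I. intervals_touch (K i) (L i)"
  shows "card F \<le> touching_bound (card I)"
  using assms
proof (induction "card I" arbitrary: I F)
  case 0
  then have "I = {}" "\<forall>K\<in>F. \<forall>L\<in>F. K = L" by auto
  then show ?case using card_le_Suc0_iff_eq[OF \<open>finite F\<close>] by simp
next
  case (Suc n)
  show ?case
  proof (cases "F = {}")
    case False
    then obtain A where A: "A \<in> F" by blast
    define T where "T i = {L\<in>F. intervals_touch (A i) (L i)}" for i
    have cover: "F \<subseteq> insert A (\<Union>i\<in>I. T i)"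
      using Suc.prems(4) A unfolding T_def by blast
    have card_T: "card (T i) \<le> touching_bound n" if i: "i \<in> I" for i
    proof -
      have "n = card (I - {i})" using Suc.hyps(2) Suc.prems(1) i by simp
      moreover have "\<exists>j\<in>I - {i}. intervals_touch (K j) (L j)"
        if K: "K \<in> T i" and L: "L \<in> T i" and "K \<noteq> L" for K L
      proof -
        obtain j where j: "j \<in> I" "intervals_touch (K j) (L j)"
          using Suc.prems(4) K L \<open>K \<noteq> L\<close> unfolding T_def by blast
        have "j \<noteq> i"
        proof
          assume "j = i"
          show False
            using no_three_intervals_pairwise_touch[of "A i" "K i" "L i"] Suc.prems(3) A i j K L
            unfolding \<open>j = i\<close> T_def by blast
        qed
        with j show ?thesis by blast
      qed
      ultimately show ?thesis
        using Suc.prems(1-3) Suc.hyps(1)[of "I - {i}" "T i"] by (auto simp: T_def)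
    qed
    have finite_T: "finite (\<Union>i\<in>I. T i)"
      using Suc.prems(1,2) by (simp add: T_def)
    have "card F \<le> card (insert A (\<Union>i\<in>I. T i))"
      using cover finite_T by (intro card_mono) auto
    also have "\<dots> \<le> Suc (card (\<Union>i\<in>I. T i))"
      by (simp add: card_insert_if finite_T)
    also have "card (\<Union>i\<in>I. T i) \<le> (\<Sum>i\<in>I. card (T i))"
      using Suc.prems(1) by (rule card_UN_le)
    also have "\<dots> \<le> card I * touching_bound n"
      using sum_mono[OF card_T] by simp
    finally show ?thesis by (simp flip: Suc.hyps(2))
  qed simp
qed

lemma card_neighborly_family_le:
  assumes "k \<le> d" "k_neighborly_family k d F" "finite F"
  shows "card F \<le> touching_bound d"
proof -
  have "card F \<le> touching_bound (card {..<d})"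
  proof (rule card_pairwise_touching_le)
    show "fst (K i) < snd (K i)" if "K \<in> F" "i \<in> {..<d}" for K i
      using assms(2) that unfolding k_neighborly_family_def std_box_def by auto
    show "\<exists>i\<in>{..<d}. intervals_touch (K i) (L i)" if "K \<in> F" "L \<in> F" "K \<noteq> L" for K L
      using assms(1,2) that neighborly_boxes_touch[of d K L k]
      unfolding k_neighborly_family_def by (metis lessThan_iff)
  qed (use assms(3) in simp_all)
  then show ?thesis by simp
qed

lemma
  assumes "k \<le> d"
  shows nbr_attained: "\<exists>F. finite F \<and> k_neighborly_family k d F \<and> card F = nbr k d"
    and card_le_nbr: "\<And>F. finite F \<Longrightarrow> k_neighborly_family k d F \<Longrightarrow> card F \<le> nbr k d"
proof -
  let ?S = "{card F | F. finite F \<and> k_neighborly_family k d F}"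
  have finite: "finite ?S"
    by (rule finite_subset[of _ "{..touching_bound d}"])
      (use card_neighborly_family_le assms in auto)
  have "card {} \<in> ?S"
    unfolding k_neighborly_family_def by (intro CollectI exI[of _ "{}"]) simp
  then have "nbr k d \<in> ?S"
    unfolding nbr_def using finite by (intro Max_in) auto
  then show "\<exists>F. finite F \<and> k_neighborly_family k d F \<and> card F = nbr k d"
    by auto
  show "card F \<le> nbr k d" if "finite F" "k_neighborly_family k d F" for F
    unfolding nbr_def using finite that by (intro Max_ge) auto
qed

definition box_append ::
  "nat \<Rightarrow> nat \<Rightarrow> (nat \<Rightarrow> real \<times> real) \<Rightarrow> (nat \<Rightarrow> real \<times> real) \<Rightarrow> nat \<Rightarrow> real \<times> real" where
  "box_append d1 d2 K L = (\<lambda>i. if i < d1 then K i else if i < d1 + d2 then L (i - d1) else undefined)"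

lemma box_append_low [simp]: "i < d1 \<Longrightarrow> box_append d1 d2 K L i = K i"
  and box_append_high [simp]: "j < d2 \<Longrightarrow> box_append d1 d2 K L (d1 + j) = L j"
  by (simp_all add: box_append_def)

lemma std_box_box_append:
  "std_box d1 K \<Longrightarrow> std_box d2 L \<Longrightarrow> std_box (d1 + d2) (box_append d1 d2 K L)"
  unfolding std_box_def box_append_def by auto

lemma box_append_inject:
  assumes "std_box d1 K" "std_box d1 K'" "std_box d2 L" "std_box d2 L'"
    and "box_append d1 d2 K L = box_append d1 d2 K' L'"
  shows "K = K'" and "L = L'"
proof -
  show "K = K'"
  proof
    fix i show "K i = K' i"
      using assms(1,2) fun_cong[OF assms(5), of i] by (cases "i < d1") (auto simp: std_box_def)
  qed
  show "L = L'"
  proof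
    fix j show "L j = L' j"
      using assms(3,4) fun_cong[OF assms(5), of "d1 + j"] by (cases "j < d2") (auto simp: std_box_def)
  qed
qed

lemma card_lessThan_add_filter:
  fixes a b :: nat
  shows "card {i. i < a + b \<and> P i} = card {i. i < a \<and> P i} + card {j. j < b \<and> P (a + j)}"
proof -
  have "{i. i < a + b \<and> P i} = {i. i < a \<and> P i} \<union> (+) a ` {j. j < b \<and> P (a + j)}"
  proof (rule set_eqI)
    fix i show "i \<in> {i. i < a + b \<and> P i} \<longleftrightarrow> i \<in> {i. i < a \<and> P i} \<union> (+) a ` {j. j < b \<and> P (a + j)}"
    proof (cases "i < a")
      case False
      then obtain j where "i = a + j" using le_Suc_ex not_le by blast
      then show ?thesis by auto
    qed auto
  qed
  moreover have "card ({i. i < a \<and> P i} \<union> (+) a ` {j. j < b \<and> P (a + j)})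
      = card {i. i < a \<and> P i} + card ((+) a ` {j. j < b \<and> P (a + j)})"
    by (rule card_Un_disjoint) auto
  moreover have "card ((+) a ` {j. j < b \<and> P (a + j)}) = card {j. j < b \<and> P (a + j)}"
    by (simp add: card_image)
  ultimately show ?thesis by simp
qed

lemma inter_dim_box_append:
  assumes "0 \<le> inter_dim d1 K K'" "0 \<le> inter_dim d2 L L'"
  shows "inter_dim (d1 + d2) (box_append d1 d2 K L) (box_append d1 d2 K' L')
         = inter_dim d1 K K' + inter_dim d2 L L'"
proof -
  have "\<forall>i<d1 + d2. intervals_meet (box_append d1 d2 K L i) (box_append d1 d2 K' L' i)"
  proof (intro allI impI)
    fix i assume "i < d1 + d2"
    then consider "i < d1" | j where "j < d2" "i = d1 + j"
      by (metis add_less_imp_less_left le_Suc_ex not_le)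
    then show "intervals_meet (box_append d1 d2 K L i) (box_append d1 d2 K' L' i)"
      using inter_dim_nonnegD(1)[OF assms(1)] inter_dim_nonnegD(1)[OF assms(2)] by cases auto
  qed
  then show ?thesis
    using inter_dim_nonnegD(2)[OF assms(1)] inter_dim_nonnegD(2)[OF assms(2)]
    by (simp add: inter_dim_eq card_lessThan_add_filter cong: conj_cong)
qed

lemma inter_dim_self:
  assumes "std_box d K" shows "inter_dim d K K = int d"
proof -
  have "{i. i < d \<and> intervals_overlap (K i) (K i)} = {..<d}"
    using assms by (auto simp: std_box_def intervals_overlap_def)
  then show ?thesis
    using assms by (simp add: inter_dim_eq std_box_def intervals_meet_def less_imp_le)
qed

lemma inter_dim_in_neighborly_family:
  assumes "k_neighborly_family k d F" "K \<in> F" "K' \<in> F"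
  shows "int d - int k \<le> inter_dim d K K'" and "inter_dim d K K' + of_bool (K \<noteq> K') \<le> int d"
proof -
  have "int d - int k \<le> inter_dim d K K' \<and> inter_dim d K K' + of_bool (K \<noteq> K') \<le> int d"
  proof (cases "K = K'")
    case True
    then show ?thesis
      using assms inter_dim_self[of d K] unfolding k_neighborly_family_def by simp
  next
    case False
    then show ?thesis
      using assms unfolding k_neighborly_family_def k_neighborly_def by force
  qed
  then show "int d - int k \<le> inter_dim d K K'" and "inter_dim d K K' + of_bool (K \<noteq> K') \<le> int d"
    by simp_all
qed

lemma k_neighborly_family_box_append:
  assumes "k1 \<le> d1" "k2 \<le> d2"
    and F: "k_neighborly_family k1 d1 F" and G: "k_neighborly_family k2 d2 G"
  shows "k_neighborly_family (k1 + k2) (d1 + d2) ((\<lambda>(K, L). box_append d1 d2 K L) ` (F \<times> G))"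
  unfolding k_neighborly_family_def
proof (intro conjI ballI impI)
  have std: "\<And>K. K \<in> F \<Longrightarrow> std_box d1 K" "\<And>L. L \<in> G \<Longrightarrow> std_box d2 L"
    using F G unfolding k_neighborly_family_def by auto
  fix X assume "X \<in> (\<lambda>(K, L). box_append d1 d2 K L) ` (F \<times> G)"
  then obtain K L where KL: "K \<in> F" "L \<in> G" "X = box_append d1 d2 K L" by auto
  then show "std_box (d1 + d2) X" using std std_box_box_append by simp
  fix Y assume "Y \<in> (\<lambda>(K, L). box_append d1 d2 K L) ` (F \<times> G)" "X \<noteq> Y"
  then obtain K' L' where KL': "K' \<in> F" "L' \<in> G" "Y = box_append d1 d2 K' L'" by auto
  with KL \<open>X \<noteq> Y\<close> have "of_bool (K \<noteq> K') + of_bool (L \<noteq> L') \<ge> (1::int)" by auto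
  moreover have "inter_dim (d1 + d2) X Y = inter_dim d1 K K' + inter_dim d2 L L'"
  proof -
    have "0 \<le> inter_dim d1 K K'" "0 \<le> inter_dim d2 L L'"
      using KL KL' assms(1,2) inter_dim_in_neighborly_family(1)[OF F, of K K']
        inter_dim_in_neighborly_family(1)[OF G, of L L'] by linarith+
    then show ?thesis using KL(3) KL'(3) by (simp add: inter_dim_box_append)
  qed
  ultimately show "k_neighborly (k1 + k2) (d1 + d2) X Y"
    using KL KL' inter_dim_in_neighborly_family[OF F, of K K'] inter_dim_in_neighborly_family[OF G, of L L']
    unfolding k_neighborly_def of_nat_add by linarith
qed

lemma nbr_mult_le:
  assumes "k1 \<le> d1" "k2 \<le> d2"
  shows "nbr k1 d1 * nbr k2 d2 \<le> nbr (k1 + k2) (d1 + d2)"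
proof -
  obtain F where F: "finite F" "k_neighborly_family k1 d1 F" "card F = nbr k1 d1"
    using nbr_attained[OF assms(1)] by blast
  obtain G where G: "finite G" "k_neighborly_family k2 d2 G" "card G = nbr k2 d2"
    using nbr_attained[OF assms(2)] by blast
  have "inj_on (\<lambda>(K, L). box_append d1 d2 K L) (F \<times> G)"
  proof (rule inj_onI, clarify)
    fix K L K' L'
    assume "K \<in> F" "L \<in> G" "K' \<in> F" "L' \<in> G"
      and "box_append d1 d2 K L = box_append d1 d2 K' L'"
    with F(2) G(2) show "K = K' \<and> L = L'"
      using box_append_inject[of d1 K K' d2 L L'] unfolding k_neighborly_family_def by simp
  qed
  then have "nbr k1 d1 * nbr k2 d2 = card ((\<lambda>(K, L). box_append d1 d2 K L) ` (F \<times> G))"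
    by (simp add: F(3) G(3) card_image card_cartesian_product)
  also have "\<dots> \<le> nbr (k1 + k2) (d1 + d2)"
    using assms F G by (intro card_le_nbr k_neighborly_family_box_append) auto
  finally show ?thesis .
qed

theorem proposition2:
  fixes s :: nat and k d :: "nat \<Rightarrow> nat"
  assumes "s \<ge> 1"
    and "\<And>i. i < s \<Longrightarrow> 1 \<le> k i \<and> k i \<le> d i"
  shows "(\<Prod>i<s. nbr (k i) (d i)) \<le> nbr (\<Sum>i<s. k i) (\<Sum>i<s. d i)"
  using assms
proof (induction s rule: nat_induct_at_least)
  case base
  then show ?case by simp
next
  case (Suc s)
  have "(\<Prod>i<Suc s. nbr (k i) (d i)) \<le> nbr (\<Sum>i<s. k i) (\<Sum>i<s. d i) * nbr (k s) (d s)"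
    using Suc by simp
  also have "\<dots> \<le> nbr ((\<Sum>i<s. k i) + k s) ((\<Sum>i<s. d i) + d s)"
    using Suc.prems by (intro nbr_mult_le sum_mono) auto
  finally show ?case by simp
qed

end
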